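(* Let $\mathcal Z$ be a finite zero-set, let $R_{a,b}\subseteq\mathcal Z$ with $a,b\ge1$, and let $Y$ be a nonempty Young diagram with $Y\subseteq R_{a-1,b-1}$. Then $$\gamma(\mathcal Z)\ge\frac12\min_{(k,\ell)\in\partial_oY}\Big(kb+\ell a-k\ell+\gamma(\mathcal Z^{\downarrow\ell})+\gamma(\mathcal Z^{\leftarrow k})\Big).$$
   Context: $\mathbb Z_+=\{0,1,2,\dots\}$, $R_{a,b}=([0,a-1]\times[0,b-1])\cap\mathbb Z_+^2$; a zero-set is a union of such rectangles (a finite one is a Young diagram). $\mathrm{row}(x,A),\mathrm{col}(x,A)$ count points of $A$ on the horizontal/vertical line through $x$; $\mathcal T(A)=A\cup\{x\notin A:(\mathrm{row}(x,A),\mathrm{col}(x,A))\notin\mathcal Z\}$; $A$ spans if $\bigcup_t\mathcal T^t(A)=\mathbb Z_+^2$; $\gamma(\mathcal Z)$ is the minimal size of a finite spanning set (with $\gamma(\emptyset)=0$). For integers $k\ge0$: $\mathcal Z^{\downarrow k}=\{(u,v-k):(u,v)\in\mathcal Z,v\ge k\}$ and $\mathcal Z^{\leftarrow k}=\{(u-k,v):(u,v)\in\mathcal Z,u\ge k\}$. The outer boundary is $\partial_oY=\{(u,v)\in\mathbb Z_+^2\setminus Y:(u-1,v)\in Y\text{ or }(u,v-1)\in Y\}$. *)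

theory Defs
  imports Complex_Main
begin

type_synonym pt = "nat \<times> nat"

definition rect :: "nat \<Rightarrow> nat \<Rightarrow> pt set" where
  "rect a b = {(i, j). i < a \<and> j < b}"

definition zero_set :: "pt set \<Rightarrow> bool" where
  "zero_set Z \<longleftrightarrow> (\<exists>S. Z = (\<Union>(a, b)\<in>S. rect a b))"

definition young_diagram :: "pt set \<Rightarrow> bool" where
  "young_diagram Y \<longleftrightarrow> zero_set Y \<and> finite Y"

definition row_pts :: "pt \<Rightarrow> pt set \<Rightarrow> pt set" where
  "row_pts x A = {y \<in> A. snd y = snd x}"

definition col_pts :: "pt \<Rightarrow> pt set \<Rightarrow> pt set" where
  "col_pts x A = {y \<in> A. fst y = fst x}"

text \<open>(row(x,A), col(x,A)) lies in Z; an infinite count never lies in Z \<subseteq> Z_+^2.\<close>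
definition counts_in :: "pt set \<Rightarrow> pt \<Rightarrow> pt set \<Rightarrow> bool" where
  "counts_in Z x A \<longleftrightarrow> finite (row_pts x A) \<and> finite (col_pts x A)
      \<and> (card (row_pts x A), card (col_pts x A)) \<in> Z"

definition step :: "pt set \<Rightarrow> pt set \<Rightarrow> pt set" where
  "step Z A = A \<union> {x. x \<notin> A \<and> \<not> counts_in Z x A}"

definition spans :: "pt set \<Rightarrow> pt set \<Rightarrow> bool" where
  "spans Z A \<longleftrightarrow> (\<Union>t. (step Z ^^ t) A) = UNIV"

definition gamma :: "pt set \<Rightarrow> nat" where
  "gamma Z = (if Z = {} then 0 else (LEAST n. \<exists>A. finite A \<and> card A = n \<and> spans Z A))"

definition shift_down :: "pt set \<Rightarrow> nat \<Rightarrow> pt set" where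
  "shift_down Z k = {(u, v - k) | u v. (u, v) \<in> Z \<and> v \<ge> k}"

definition shift_left :: "pt set \<Rightarrow> nat \<Rightarrow> pt set" where
  "shift_left Z k = {(u - k, v) | u v. (u, v) \<in> Z \<and> u \<ge> k}"

definition outer_boundary :: "pt set \<Rightarrow> pt set" where
  "outer_boundary Y = {(u, v). (u, v) \<notin> Y \<and>
      ((u \<ge> 1 \<and> (u - 1, v) \<in> Y) \<or> (v \<ge> 1 \<and> (u, v - 1) \<in> Y))}"

end

theory Submission
  imports Defs "HOL-Library.Infinite_Set"
begin

text \<open>Take a spanning set A of size gamma Z. A point outside A can only be added on a row
holding at least a points or a column holding at least b points, since rect a b \<subseteq> Z. Order
the columns and rows by the time at which they become full in this sense and walk along this
order from the empty set: the counts (card C, card R) of the columns and rows passed so far move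
like a staircase from (0, 0) and must leave Y through a point (k, l) of its outer boundary.
When column x \<in> C becomes full, its b points lie in A or on rows of R that became full earlier,
and symmetrically for the rows of R; each pair in C \<times> R is charged at most once, so
k b + l a \<le> |A on C| + |A on R| + k l. On the other hand, filling the columns C completely and
deleting them spans shift_left Z k from the rest of A, so gamma (shift_left Z k) \<le> |A| - |A on C|,
and likewise gamma (shift_down Z l) \<le> |A| - |A on R|. Adding the three inequalities gives the
bound.\<close>

section \<open>The spreading process\<close>

lemma zero_set_downward_closed:
  assumes "zero_set Z" "(u, v) \<in> Z" "u' \<le> u" "v' \<le> v"
  shows "(u', v') \<in> Z"
  using assms unfolding zero_set_def rect_def by fastforce

lemma subset_step: "A \<subseteq> step Z A"
  unfolding step_def by blast

lemma counts_in_antimono: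
  assumes Z: "zero_set Z" and "A \<subseteq> B" and counts: "counts_in Z x B"
  shows "counts_in Z x A"
proof -
  have sub: "row_pts x A \<subseteq> row_pts x B" "col_pts x A \<subseteq> col_pts x B"
    using \<open>A \<subseteq> B\<close> by (auto simp: row_pts_def col_pts_def)
  have fin: "finite (row_pts x B)" "finite (col_pts x B)"
    and mem: "(card (row_pts x B), card (col_pts x B)) \<in> Z"
    using counts by (auto simp: counts_in_def)
  have "finite (row_pts x A)" "finite (col_pts x A)"
    using sub fin by (auto intro: finite_subset)
  moreover have "(card (row_pts x A), card (col_pts x A)) \<in> Z"
    using zero_set_downward_closed[OF Z mem] card_mono[OF fin(1) sub(1)] card_mono[OF fin(2) sub(2)]
    by blast
  ultimately show ?thesis
    unfolding counts_in_def by blast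
qed

lemma step_mono:
  assumes "zero_set Z" "A \<subseteq> B"
  shows "step Z A \<subseteq> step Z B"
proof
  fix x assume "x \<in> step Z A"
  then have "x \<in> B \<or> \<not> counts_in Z x A"
    using assms(2) unfolding step_def by blast
  then show "x \<in> step Z B"
    using counts_in_antimono[OF assms] unfolding step_def by blast
qed

lemma funpow_step_mono: "zero_set Z \<Longrightarrow> A \<subseteq> B \<Longrightarrow> (step Z ^^ t) A \<subseteq> (step Z ^^ t) B"
  by (induction t) (auto intro: step_mono[THEN subsetD])

lemma funpow_step_increasing: "s \<le> t \<Longrightarrow> (step Z ^^ s) A \<subseteq> (step Z ^^ t) A"
  by (rule lift_Suc_mono_le[where f = "\<lambda>t. (step Z ^^ t) A"]) (simp_all add: subset_step)

lemma spans_mono: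
  assumes "zero_set Z" "A \<subseteq> B" "spans Z A"
  shows "spans Z B"
proof -
  have "(\<Union>t. (step Z ^^ t) A) \<subseteq> (\<Union>t. (step Z ^^ t) B)"
    using funpow_step_mono[OF assms(1,2)] by (intro UN_mono) auto
  then show ?thesis
    using assms(3) unfolding spans_def by auto
qed

lemma spans_finite_subset_at_time:
  assumes "spans Z A" "finite F"
  obtains t where "F \<subseteq> (step Z ^^ t) A"
proof (rule finite_subset_Union_chain[where \<B> = "range (\<lambda>t. (step Z ^^ t) A)" and \<A> = UNIV])
  show "F \<subseteq> \<Union> (range (\<lambda>t. (step Z ^^ t) A))"
    using assms(1) unfolding spans_def by blast
  show "subset.chain UNIV (range (\<lambda>t. (step Z ^^ t) A))"
    unfolding subset.chain_def using funpow_step_increasing nat_le_linear by blast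
qed (use assms that in auto)

lemma gamma_le_card: "finite A \<Longrightarrow> spans Z A \<Longrightarrow> gamma Z \<le> card A"
  unfolding gamma_def by (auto intro: Least_le)

lemma mem_step_if_long_row:
  assumes "Z \<subseteq> rect m n" "F \<subseteq> row_pts x S" "finite F" "m \<le> card F"
  shows "x \<in> step Z S"
proof -
  have "\<not> counts_in Z x S"
  proof
    assume "counts_in Z x S"
    then have "finite (row_pts x S)" "card (row_pts x S) < m"
      using assms(1) by (auto simp: counts_in_def rect_def)
    then show False
      using card_mono assms(2,4) by (metis leD le_trans)
  qed
  then show ?thesis unfolding step_def by blast
qed

lemma mem_step_if_long_col:
  assumes "Z \<subseteq> rect m n" "F \<subseteq> col_pts x S" "finite F" "n \<le> card F"
  shows "x \<in> step Z S"
proof -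
  have "\<not> counts_in Z x S"
  proof
    assume "counts_in Z x S"
    then have "finite (col_pts x S)" "card (col_pts x S) < n"
      using assms(1) by (auto simp: counts_in_def rect_def)
    then show False
      using card_mono assms(2,4) by (metis leD le_trans)
  qed
  then show ?thesis unfolding step_def by blast
qed

text \<open>Every row meeting rect m n fills up in one step, and then every column in the next.\<close>
lemma spans_rect:
  assumes Z: "Z \<subseteq> rect m n"
  shows "spans Z (rect m n)"
proof -
  have rows: "(x, y) \<in> step Z (rect m n)" if "y < n" for x y
    by (rule mem_step_if_long_row[OF Z, of "(\<lambda>i. (i, y)) ` {..<m}"])
      (use that in \<open>auto simp: row_pts_def rect_def card_image inj_on_def\<close>)
  have "p \<in> step Z (step Z (rect m n))" for p
  proof (rule mem_step_if_long_col[OF Z])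
    show "(\<lambda>j. (fst p, j)) ` {..<n} \<subseteq> col_pts p (step Z (rect m n))"
      using rows by (force simp: col_pts_def)
    show "n \<le> card ((\<lambda>j. (fst p, j)) ` {..<n})"
      by (simp add: card_image inj_on_def)
  qed simp
  then have "p \<in> (step Z ^^ 2) (rect m n)" for p
    by (simp add: numeral_2_eq_2)
  then show ?thesis
    unfolding spans_def by blast
qed

lemma finite_subset_rect:
  assumes "finite Z"
  obtains m n where "Z \<subseteq> rect m n"
proof
  show "Z \<subseteq> rect (Suc (Max (fst ` Z))) (Suc (Max (snd ` Z)))"
  proof
    fix p assume "p \<in> Z"
    then have "fst p \<le> Max (fst ` Z)" "snd p \<le> Max (snd ` Z)"
      using assms by simp_all
    then show "p \<in> rect (Suc (Max (fst ` Z))) (Suc (Max (snd ` Z)))"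
      by (cases p) (simp add: rect_def)
  qed
qed

lemma finite_rect: "finite (rect m n)"
proof (rule finite_subset)
  show "rect m n \<subseteq> {..<m} \<times> {..<n}"
    unfolding rect_def by blast
qed simp

lemma gamma_attained:
  assumes "finite Z" "Z \<noteq> {}"
  obtains A where "finite A" "card A = gamma Z" "spans Z A"
proof -
  obtain m n where "Z \<subseteq> rect m n"
    using finite_subset_rect[OF assms(1)] .
  then have "spans Z (rect m n)"
    by (rule spans_rect)
  then have "\<exists>k A. finite A \<and> card A = k \<and> spans Z A"
    using finite_rect by blast
  then have "\<exists>A. finite A \<and> card A = (LEAST k. \<exists>A. finite A \<and> card A = k \<and> spans Z A) \<and> spans Z A"
    by (rule LeastI_ex)
  then show thesis
    using that assms(2) unfolding gamma_def by auto
qed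

section \<open>Transposition\<close>

lemma swap_rect: "prod.swap ` rect m n = rect n m"
  unfolding rect_def by force

lemma swap_mem_swap_image: "prod.swap x \<in> prod.swap ` S \<longleftrightarrow> x \<in> S"
  by (rule inj_image_mem_iff[OF inj_swap])

lemma zero_set_swap:
  assumes "zero_set Z"
  shows "zero_set (prod.swap ` Z)"
proof -
  obtain S where S: "Z = (\<Union>(a, b)\<in>S. rect a b)"
    using assms unfolding zero_set_def by blast
  have "prod.swap ` Z = (\<Union>(a, b)\<in>prod.swap ` S. rect a b)"
    unfolding S by (force simp: rect_def)
  then show ?thesis
    unfolding zero_set_def by blast
qed

lemma row_pts_swap: "row_pts (prod.swap x) (prod.swap ` A) = prod.swap ` col_pts x A"
  unfolding row_pts_def col_pts_def by force

lemma col_pts_swap: "col_pts (prod.swap x) (prod.swap ` A) = prod.swap ` row_pts x A"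
  unfolding row_pts_def col_pts_def by force

lemma counts_in_swap:
  "counts_in (prod.swap ` Z) (prod.swap x) (prod.swap ` A) \<longleftrightarrow> counts_in Z x A"
proof -
  have inj: "inj_on prod.swap S" for S :: "pt set"
    using inj_swap by (rule inj_on_subset) (rule subset_UNIV)
  have "(c, r) \<in> prod.swap ` Z \<longleftrightarrow> (r, c) \<in> Z" for r c
    using swap_mem_swap_image[of "(r, c)" Z] by simp
  then show ?thesis
    unfolding counts_in_def row_pts_swap col_pts_swap
    by (auto simp: finite_image_iff[OF inj] card_image[OF inj])
qed

lemma step_swap: "step (prod.swap ` Z) (prod.swap ` A) = prod.swap ` step Z A"
proof -
  have "prod.swap x \<in> step (prod.swap ` Z) (prod.swap ` A) \<longleftrightarrow> x \<in> step Z A" for x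
    unfolding step_def by (simp add: counts_in_swap swap_mem_swap_image)
  from this[of "prod.swap x" for x] show ?thesis
    by (auto simp: set_eq_iff swap_mem_swap_image[of "prod.swap _", simplified])
qed

lemma funpow_step_swap: "(step (prod.swap ` Z) ^^ t) (prod.swap ` A) = prod.swap ` (step Z ^^ t) A"
  by (induction t) (simp_all add: step_swap)

lemma spans_swap: "spans (prod.swap ` Z) (prod.swap ` A) \<longleftrightarrow> spans Z A"
proof -
  have "(\<Union>t. (step (prod.swap ` Z) ^^ t) (prod.swap ` A)) = prod.swap ` (\<Union>t. (step Z ^^ t) A)"
    by (simp add: funpow_step_swap image_UN)
  moreover have "prod.swap ` U = UNIV \<longleftrightarrow> U = UNIV" for U :: "pt set"
    using inj_image_eq_iff[OF inj_swap, of U UNIV] surj_swap by simp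
  ultimately show ?thesis
    unfolding spans_def by simp
qed

lemma gamma_swap: "gamma (prod.swap ` Z) = gamma Z"
proof -
  have "(\<exists>A. finite A \<and> card A = k \<and> spans (prod.swap ` Z) A) \<longleftrightarrow>
      (\<exists>A. finite A \<and> card A = k \<and> spans Z A)" for k
  proof
    assume "\<exists>A. finite A \<and> card A = k \<and> spans (prod.swap ` Z) A"
    then obtain A where "finite A" "card A = k" "spans (prod.swap ` Z) (prod.swap ` prod.swap ` A)"
      by (auto simp: image_image)
    then show "\<exists>A. finite A \<and> card A = k \<and> spans Z A"
      by (intro exI[of _ "prod.swap ` A"]) (simp add: spans_swap card_image)
  next
    assume "\<exists>A. finite A \<and> card A = k \<and> spans Z A"
    then obtain A where "finite A" "card A = k" "spans Z A"
      by blast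
    then show "\<exists>A. finite A \<and> card A = k \<and> spans (prod.swap ` Z) A"
      by (intro exI[of _ "prod.swap ` A"]) (simp add: spans_swap card_image)
  qed
  then show ?thesis
    unfolding gamma_def by simp
qed

lemma card_swap_Int_columns:
  "card (prod.swap ` A \<inter> {p. fst p \<in> C}) = card (A \<inter> {p. snd p \<in> C})"
proof -
  have "prod.swap ` A \<inter> {p. fst p \<in> C} = prod.swap ` (A \<inter> {p. snd p \<in> C})"
    by auto
  then show ?thesis
    by (simp add: card_image)
qed

lemma shift_left_swap: "shift_left (prod.swap ` Z) k = prod.swap ` shift_down Z k"
  unfolding shift_left_def shift_down_def by force

section \<open>Filling and deleting columns\<close>

text \<open>Filling the columns C raises every row count by card C and leaves the other column
counts alone; the shift of Z by card C compensates exactly.\<close>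
lemma counts_in_insert_columns:
  fixes \<phi> :: "nat \<Rightarrow> nat"
  assumes inj: "inj \<phi>" and range: "range \<phi> = - C" and fin: "finite C"
  defines "F \<equiv> {p. fst p \<in> C}" and "g \<equiv> apfst \<phi>"
  shows "counts_in Z (g p) (F \<union> g ` D) \<longleftrightarrow> counts_in (shift_left Z (card C)) p D"
proof -
  have ginj: "inj_on g S" for S
    using inj unfolding g_def by (simp add: inj_on_subset[of "apfst \<phi>" UNIV])
  have outside: "fst (g q) \<notin> C" for q
    using range unfolding g_def by auto
  have row: "row_pts (g p) (F \<union> g ` D) = (C \<times> {snd p}) \<union> g ` row_pts p D"
    unfolding row_pts_def F_def g_def by (auto simp: image_iff)
  have "fst (g q) = fst (g p) \<longleftrightarrow> fst q = fst p" for q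
    using inj unfolding g_def by (simp add: inj_eq)
  then have col: "col_pts (g p) (F \<union> g ` D) = g ` col_pts p D"
    using outside[of p] unfolding col_pts_def F_def by auto
  have "g ` row_pts p D \<subseteq> - F" "C \<times> {snd p} \<subseteq> F"
    using outside unfolding F_def by auto
  then have disjoint: "(C \<times> {snd p}) \<inter> g ` row_pts p D = {}"
    by blast
  have "finite (row_pts (g p) (F \<union> g ` D)) \<longleftrightarrow> finite (row_pts p D)"
    unfolding row using fin finite_image_iff[OF ginj] by simp
  moreover have "finite (row_pts p D) \<Longrightarrow>
      card (row_pts (g p) (F \<union> g ` D)) = card C + card (row_pts p D)"
    unfolding row using fin by (simp add: card_Un_disjoint[OF _ _ disjoint] card_image[OF ginj]
        card_cartesian_product)
  moreover have "finite (col_pts (g p) (F \<union> g ` D)) \<longleftrightarrow> finite (col_pts p D)"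
    "card (col_pts (g p) (F \<union> g ` D)) = card (col_pts p D)"
    unfolding col by (simp_all add: finite_image_iff[OF ginj] card_image[OF ginj])
  ultimately show ?thesis
    unfolding counts_in_def shift_left_def by (force simp: add.commute)
qed

lemma step_insert_columns:
  fixes \<phi> :: "nat \<Rightarrow> nat"
  assumes "inj \<phi>" "range \<phi> = - C" "finite C"
  defines "F \<equiv> {p. fst p \<in> C}" and "g \<equiv> apfst \<phi>"
  shows "step Z (F \<union> g ` D) = F \<union> g ` step (shift_left Z (card C)) D"
proof (rule set_eqI)
  fix p :: pt
  have inj_g: "inj g"
    using assms(1) unfolding g_def by simp
  show "p \<in> step Z (F \<union> g ` D) \<longleftrightarrow> p \<in> F \<union> g ` step (shift_left Z (card C)) D"
  proof (cases "p \<in> F")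
    case True
    then show ?thesis
      using subset_step by blast
  next
    case False
    then obtain u where "fst p = \<phi> u"
      using assms(2) unfolding F_def by auto
    then have "p = g (u, snd p)"
      unfolding g_def by (simp add: prod_eq_iff)
    then obtain q where q: "p = g q"
      by blast
    have "g q \<notin> F"
      using False q by simp
    then have mem: "g q \<in> F \<union> g ` S \<longleftrightarrow> q \<in> S" for S
      by (simp add: inj_image_mem_iff[OF inj_g])
    have counts: "counts_in Z (g q) (F \<union> g ` D) \<longleftrightarrow> counts_in (shift_left Z (card C)) q D"
      unfolding F_def g_def by (rule counts_in_insert_columns[OF assms(1-3)])
    show ?thesis
      unfolding q step_def[of Z] Un_iff[of "g q" "F \<union> g ` D"] mem_Collect_eq mem counts
      by (simp add: step_def)
  qed
qed

lemma funpow_step_insert_columns: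
  fixes \<phi> :: "nat \<Rightarrow> nat"
  assumes "inj \<phi>" "range \<phi> = - C" "finite C"
  shows "(step Z ^^ t) ({p. fst p \<in> C} \<union> apfst \<phi> ` D)
    = {p. fst p \<in> C} \<union> apfst \<phi> ` (step (shift_left Z (card C)) ^^ t) D"
  by (induction t) (simp_all add: step_insert_columns[OF assms])

lemma spans_remove_columns:
  fixes \<phi> :: "nat \<Rightarrow> nat"
  assumes "inj \<phi>" "range \<phi> = - C" "finite C"
    and "spans Z ({p. fst p \<in> C} \<union> apfst \<phi> ` D)"
  shows "spans (shift_left Z (card C)) D"
  unfolding spans_def
proof (intro set_eqI iffI)
  fix q :: pt
  have inj_g: "inj (apfst \<phi>)"
    using assms(1) by simp
  have "fst (apfst \<phi> q) \<notin> C"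
    using assms(2) by (cases q) auto
  moreover obtain t where "apfst \<phi> q \<in> (step Z ^^ t) ({p. fst p \<in> C} \<union> apfst \<phi> ` D)"
    using assms(4) unfolding spans_def by blast
  ultimately have "q \<in> (step (shift_left Z (card C)) ^^ t) D"
    unfolding funpow_step_insert_columns[OF assms(1-3)] by (simp add: inj_image_mem_iff[OF inj_g])
  then show "q \<in> (\<Union>t. (step (shift_left Z (card C)) ^^ t) D)"
    by blast
qed simp

lemma gamma_shift_left_le:
  assumes "zero_set Z" "finite A" "spans Z A" "finite C"
  shows "gamma (shift_left Z (card C)) + card (A \<inter> {p. fst p \<in> C}) \<le> card A"
proof -
  let ?F = "{p :: pt. fst p \<in> C}"
  have "infinite (- C)"
    using assms(4) by (simp add: Compl_eq_Diff_UNIV infinite_UNIV_nat)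
  then obtain \<phi> :: "nat \<Rightarrow> nat" where inj: "inj \<phi>" and range: "range \<phi> = - C"
    using bij_enumerate unfolding bij_betw_def by blast
  define B where "B = apfst \<phi> -` A"
  have "range (apfst \<phi>) = - ?F"
    using range by (force simp: image_iff)
  then have image: "apfst \<phi> ` B = A - ?F"
    unfolding B_def by (simp add: image_vimage_eq Diff_eq)
  have inj_B: "inj_on (apfst \<phi>) B"
    using inj by (simp add: inj_on_subset[of "apfst \<phi>" UNIV])
  have "finite B"
    unfolding B_def using assms(2) inj by (simp add: finite_vimageI)
  moreover have "spans Z (?F \<union> apfst \<phi> ` B)"
    using spans_mono[OF assms(1) _ assms(3)] image by blast
  then have "spans (shift_left Z (card C)) B"
    by (rule spans_remove_columns[OF inj range assms(4)])
  ultimately have "gamma (shift_left Z (card C)) \<le> card (A - ?F)"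
    using gamma_le_card card_image[OF inj_B] image by metis
  then show ?thesis
    using card_Int_Diff[OF assms(2), of ?F] by linarith
qed

lemma gamma_shift_down_le:
  assumes "zero_set Z" "finite A" "spans Z A" "finite R"
  shows "gamma (shift_down Z (card R)) + card (A \<inter> {p. snd p \<in> R}) \<le> card A"
proof -
  have "gamma (shift_left (prod.swap ` Z) (card R)) = gamma (shift_down Z (card R))"
    by (simp add: shift_left_swap gamma_swap)
  then show ?thesis
    using gamma_shift_left_le[OF zero_set_swap[OF assms(1)] _ _ assms(4), of "prod.swap ` A"]
      assms(2,3) by (simp add: spans_swap card_image card_swap_Int_columns)
qed

section \<open>Initial segments of the filling order\<close>

definition initial_segment :: "(nat \<Rightarrow> nat) \<Rightarrow> (nat \<Rightarrow> nat) \<Rightarrow> nat set \<Rightarrow> nat set \<Rightarrow> bool" where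
  "initial_segment tc tr C R \<longleftrightarrow> finite C \<and> finite R
     \<and> (\<forall>x\<in>C. {x'. tc x' < tc x} \<subseteq> C \<and> {y. tr y < tc x} \<subseteq> R)
     \<and> (\<forall>y\<in>R. {y'. tr y' < tr y} \<subseteq> R \<and> {x. tc x < tr y} \<subseteq> C)"

lemma initial_segment_swap: "initial_segment tr tc R C \<longleftrightarrow> initial_segment tc tr C R"
  unfolding initial_segment_def by blast

lemma initial_segment_insert:
  assumes "initial_segment tc tr C R"
    and "{x'. tc x' < tc x} \<subseteq> C" "{y. tr y < tc x} \<subseteq> R"
  shows "initial_segment tc tr (insert x C) R"
  using assms unfolding initial_segment_def by (auto intro: less_trans)

lemma initial_segment_extend:
  assumes seg: "initial_segment tc tr C R"
  obtains C' R' where "initial_segment tc tr C' R'"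
    "(card C', card R') = (Suc (card C), card R) \<or> (card C', card R') = (card C, Suc (card R))"
proof -
  have fin: "finite C" "finite R"
    using seg unfolding initial_segment_def by blast+
  define M where "M = tc ` (- C) \<union> tr ` (- R)"
  define m where "m = (LEAST t. t \<in> M)"
  obtain x0 where "x0 \<notin> C"
    using fin(1) ex_new_if_finite[OF infinite_UNIV_nat] by blast
  then have "tc x0 \<in> M"
    unfolding M_def by blast
  then have "m \<in> M"
    unfolding m_def by (rule LeastI)
  have below: "{x. tc x < m} \<subseteq> C" "{y. tr y < m} \<subseteq> R"
    using not_less_Least[of _ "\<lambda>t. t \<in> M"] unfolding m_def M_def by blast+
  from \<open>m \<in> M\<close> consider x where "x \<notin> C" "m = tc x" | y where "y \<notin> R" "m = tr y"
    unfolding M_def by blast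
  then show thesis
  proof cases
    case (1 x)
    then have "initial_segment tc tr (insert x C) R"
      using initial_segment_insert[OF seg] below by simp
    then show thesis
      using that 1 fin by simp
  next
    case (2 y)
    then have "initial_segment tr tc (insert y R) C"
      using initial_segment_insert[of tr tc R C y] seg below by (simp add: initial_segment_swap)
    then show thesis
      using that 2 fin by (simp add: initial_segment_swap)
  qed
qed

lemma outer_boundary_intro:
  assumes "(k, l) \<in> Y" "p \<notin> Y" "p = (Suc k, l) \<or> p = (k, Suc l)"
  shows "p \<in> outer_boundary Y"
  using assms unfolding outer_boundary_def by auto

lemma initial_segment_staircase:
  assumes "(0, 0) \<in> Y"
  shows "(\<exists>C R. initial_segment tc tr C R \<and> card C + card R = n \<and> (card C, card R) \<in> Y)
    \<or> (\<exists>C R. initial_segment tc tr C R \<and> (card C, card R) \<in> outer_boundary Y)"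
proof (induction n)
  case 0
  have "initial_segment tc tr {} {}"
    unfolding initial_segment_def by simp
  then show ?case
    using assms by force
next
  case (Suc n)
  show ?case
  proof (cases "\<exists>C R. initial_segment tc tr C R \<and> (card C, card R) \<in> outer_boundary Y")
    case False
    then obtain C R where seg: "initial_segment tc tr C R" and
      "card C + card R = n" "(card C, card R) \<in> Y"
      using Suc.IH by blast
    obtain C' R' where seg': "initial_segment tc tr C' R'" and
      grow: "(card C', card R') = (Suc (card C), card R) \<or> (card C', card R') = (card C, Suc (card R))"
      using initial_segment_extend[OF seg] .
    show ?thesis
    proof (cases "(card C', card R') \<in> Y")
      case True
      moreover have "card C' + card R' = Suc n"
        using grow \<open>card C + card R = n\<close> by auto
      ultimately show ?thesis
        using seg' by blast
    next
      case False
      then show ?thesis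
        using seg' outer_boundary_intro[OF \<open>(card C, card R) \<in> Y\<close> False grow] by blast
    qed
  qed blast
qed

lemma initial_segment_at_outer_boundary:
  assumes "finite Y" "(0, 0) \<in> Y"
  obtains C R where "initial_segment tc tr C R" "(card C, card R) \<in> outer_boundary Y"
proof -
  obtain m n where "Y \<subseteq> rect m n"
    using finite_subset_rect[OF assms(1)] .
  then have "\<not> (\<exists>C R. card C + card R = m + n \<and> (card C, card R) \<in> Y)"
    unfolding rect_def by fastforce
  then show thesis
    using initial_segment_staircase[OF assms(2), of tc tr "m + n"] that by blast
qed

lemma finite_outer_boundary:
  assumes "finite Y"
  shows "finite (outer_boundary Y)"
proof (rule finite_subset)
  show "outer_boundary Y \<subseteq> apfst Suc ` Y \<union> apsnd Suc ` Y"
    unfolding outer_boundary_def by (force simp: image_iff)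
qed (use assms in simp)

section \<open>Filling times of rows and columns\<close>

definition has_at_least :: "nat \<Rightarrow> 'a set \<Rightarrow> bool" where
  "has_at_least n S \<longleftrightarrow> infinite S \<or> n \<le> card S"

definition col_full_time :: "pt set \<Rightarrow> pt set \<Rightarrow> nat \<Rightarrow> nat \<Rightarrow> nat" where
  "col_full_time Z A b x = (LEAST t. has_at_least b {q \<in> (step Z ^^ t) A. fst q = x})"

definition row_full_time :: "pt set \<Rightarrow> pt set \<Rightarrow> nat \<Rightarrow> nat \<Rightarrow> nat" where
  "row_full_time Z A a y = (LEAST t. has_at_least a {q \<in> (step Z ^^ t) A. snd q = y})"

lemma has_at_least_subset: "has_at_least n S \<Longrightarrow> S \<subseteq> T \<Longrightarrow> finite T \<Longrightarrow> n \<le> card T"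
  unfolding has_at_least_def by (meson card_mono finite_subset le_trans)

lemma has_at_least_image: "inj_on f S \<Longrightarrow> has_at_least n (f ` S) \<longleftrightarrow> has_at_least n S"
  unfolding has_at_least_def by (simp add: finite_image_iff card_image)

lemma col_full_time_le:
  "has_at_least b {q \<in> (step Z ^^ t) A. fst q = x} \<Longrightarrow> col_full_time Z A b x \<le> t"
  unfolding col_full_time_def by (rule Least_le)

lemma row_full_time_le:
  "has_at_least a {q \<in> (step Z ^^ t) A. snd q = y} \<Longrightarrow> row_full_time Z A a y \<le> t"
  unfolding row_full_time_def by (rule Least_le)

lemma col_full_time_full:
  assumes "spans Z A"
  shows "has_at_least b {q \<in> (step Z ^^ col_full_time Z A b x) A. fst q = x}"
  unfolding col_full_time_def
proof (rule LeastI_ex)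
  obtain t where t: "{x} \<times> {..<b} \<subseteq> (step Z ^^ t) A"
    using spans_finite_subset_at_time[OF assms, of "{x} \<times> {..<b}"] by blast
  have "b \<le> card {q \<in> (step Z ^^ t) A. fst q = x}" if "finite {q \<in> (step Z ^^ t) A. fst q = x}"
    using card_mono[OF that, of "{x} \<times> {..<b}"] t by (force simp: card_cartesian_product)
  then show "\<exists>t. has_at_least b {q \<in> (step Z ^^ t) A. fst q = x}"
    unfolding has_at_least_def by blast
qed

lemma full_time_of_added_point:
  assumes "rect a b \<subseteq> Z" "p \<in> (step Z ^^ t) A" "p \<notin> A"
  shows "col_full_time Z A b (fst p) < t \<or> row_full_time Z A a (snd p) < t"
  using assms(2)
proof (induction t)
  case 0
  then show ?case
    using assms(3) by simp
next
  case (Suc t)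
  show ?case
  proof (cases "p \<in> (step Z ^^ t) A")
    case True
    then show ?thesis
      using Suc.IH by auto
  next
    case False
    let ?row = "{q \<in> (step Z ^^ t) A. snd q = snd p}"
    let ?col = "{q \<in> (step Z ^^ t) A. fst q = fst p}"
    have "\<not> counts_in Z p ((step Z ^^ t) A)"
      using Suc.prems False unfolding step_def by simp
    then have "\<not> (finite ?row \<and> card ?row < a \<and> finite ?col \<and> card ?col < b)"
      using assms(1) unfolding counts_in_def row_pts_def col_pts_def rect_def by blast
    then have "has_at_least b ?col \<or> has_at_least a ?row"
      unfolding has_at_least_def by auto
    then show ?thesis
      using col_full_time_le row_full_time_le by (meson le_imp_less_Suc)
  qed
qed

lemma column_count:
  assumes "rect a b \<subseteq> Z" "spans Z A" "finite A" "finite R"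
    and rows: "{y. row_full_time Z A a y < col_full_time Z A b x} \<subseteq> R"
  shows "b \<le> card {q \<in> A. fst q = x}
    + card {y \<in> R. row_full_time Z A a y < col_full_time Z A b x}"
proof -
  let ?tc = "col_full_time Z A b" and ?tr = "row_full_time Z A a"
  let ?earlier = "{y \<in> R. ?tr y < ?tc x}"
  have "{q \<in> (step Z ^^ ?tc x) A. fst q = x} \<subseteq> {q \<in> A. fst q = x} \<union> Pair x ` ?earlier"
  proof
    fix q assume q: "q \<in> {q \<in> (step Z ^^ ?tc x) A. fst q = x}"
    show "q \<in> {q \<in> A. fst q = x} \<union> Pair x ` ?earlier"
    proof (cases "q \<in> A")
      case False
      then have "?tr (snd q) < ?tc x"
        using full_time_of_added_point[OF assms(1), of q "?tc x" A] q by auto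
      then show ?thesis
        using q rows by (cases q) auto
    qed (use q in simp)
  qed
  then have "b \<le> card ({q \<in> A. fst q = x} \<union> Pair x ` ?earlier)"
    by (rule has_at_least_subset[OF col_full_time_full[OF assms(2)]]) (use assms(3,4) in simp)
  also have "\<dots> \<le> card {q \<in> A. fst q = x} + card (Pair x ` ?earlier)"
    by (rule card_Un_le)
  also have "\<dots> = card {q \<in> A. fst q = x} + card ?earlier"
    by (simp add: card_image inj_on_def)
  finally show ?thesis .
qed

lemma sum_card_column_slices:
  assumes "finite A" "finite C"
  shows "(\<Sum>x\<in>C. card {q \<in> A. fst q = x}) = card (A \<inter> {p. fst p \<in> C})"
proof -
  have "(\<Sum>x\<in>C. card {q \<in> A. fst q = x}) = card (\<Union>x\<in>C. {q \<in> A. fst q = x})"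
    using assms by (intro card_UN_disjoint[symmetric]) auto
  also have "(\<Union>x\<in>C. {q \<in> A. fst q = x}) = A \<inter> {p. fst p \<in> C}"
    by auto
  finally show ?thesis .
qed

lemma columns_count:
  assumes "rect a b \<subseteq> Z" "spans Z A" "finite A"
    and seg: "initial_segment (col_full_time Z A b) (row_full_time Z A a) C R"
  shows "card C * b \<le> card (A \<inter> {p. fst p \<in> C})
    + card {(x, y) \<in> C \<times> R. row_full_time Z A a y < col_full_time Z A b x}"
proof -
  let ?tc = "col_full_time Z A b" and ?tr = "row_full_time Z A a"
  have fin: "finite C" "finite R" and rows: "\<And>x. x \<in> C \<Longrightarrow> {y. ?tr y < ?tc x} \<subseteq> R"
    using seg unfolding initial_segment_def by blast+
  have "card C * b = (\<Sum>x\<in>C. b)"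
    by simp
  also have "\<dots> \<le> (\<Sum>x\<in>C. card {q \<in> A. fst q = x} + card {y \<in> R. ?tr y < ?tc x})"
    using column_count[OF assms(1-3) fin(2) rows] by (rule sum_mono)
  also have "\<dots> = card (A \<inter> {p. fst p \<in> C}) + card (Sigma C (\<lambda>x. {y \<in> R. ?tr y < ?tc x}))"
    using fin assms(3) by (simp add: sum.distrib sum_card_column_slices card_SigmaI)
  also have "Sigma C (\<lambda>x. {y \<in> R. ?tr y < ?tc x}) = {(x, y) \<in> C \<times> R. ?tr y < ?tc x}"
    by auto
  finally show ?thesis .
qed

lemma col_full_time_swap: "col_full_time (prod.swap ` Z) (prod.swap ` A) a = row_full_time Z A a"
proof -
  have "{q \<in> (step (prod.swap ` Z) ^^ t) (prod.swap ` A). fst q = y}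
      = prod.swap ` {q \<in> (step Z ^^ t) A. snd q = y}" for t y
    by (auto simp: funpow_step_swap)
  then show ?thesis
    unfolding col_full_time_def row_full_time_def by (simp add: has_at_least_image)
qed

lemma row_full_time_swap: "row_full_time (prod.swap ` Z) (prod.swap ` A) b = col_full_time Z A b"
proof -
  have "{q \<in> (step (prod.swap ` Z) ^^ t) (prod.swap ` A). snd q = x}
      = prod.swap ` {q \<in> (step Z ^^ t) A. fst q = x}" for t x
    by (auto simp: funpow_step_swap)
  then show ?thesis
    unfolding col_full_time_def row_full_time_def by (simp add: has_at_least_image)
qed

lemma rows_count:
  assumes "rect a b \<subseteq> Z" "spans Z A" "finite A"
    and "initial_segment (col_full_time Z A b) (row_full_time Z A a) C R"
  shows "card R * a \<le> card (A \<inter> {p. snd p \<in> R})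
    + card {(y, x) \<in> R \<times> C. col_full_time Z A b x < row_full_time Z A a y}"
proof -
  have "rect b a \<subseteq> prod.swap ` Z"
    using assms(1) swap_rect by blast
  then show ?thesis
    using columns_count[of b a "prod.swap ` Z" "prod.swap ` A" R C] assms(2-4)
    by (simp add: spans_swap card_image card_swap_Int_columns col_full_time_swap row_full_time_swap
        initial_segment_swap)
qed

lemma full_lines_count:
  assumes "rect a b \<subseteq> Z" "spans Z A" "finite A"
    and seg: "initial_segment (col_full_time Z A b) (row_full_time Z A a) C R"
  shows "card C * b + card R * a
    \<le> card (A \<inter> {p. fst p \<in> C}) + card (A \<inter> {p. snd p \<in> R}) + card C * card R"
proof -
  let ?tc = "col_full_time Z A b" and ?tr = "row_full_time Z A a"
  let ?col_later = "{(x, y) \<in> C \<times> R. ?tr y < ?tc x}"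
  let ?row_later = "{(y, x) \<in> R \<times> C. ?tc x < ?tr y}"
  have fin: "finite C" "finite R"
    using seg unfolding initial_segment_def by blast+
  have sub: "?col_later \<union> prod.swap ` ?row_later \<subseteq> C \<times> R"
    by auto
  then have "finite ?col_later" "finite (prod.swap ` ?row_later)"
    using fin finite_subset[OF sub] by simp_all
  moreover have "?col_later \<inter> prod.swap ` ?row_later = {}"
    by auto
  ultimately have "card ?col_later + card (prod.swap ` ?row_later)
      = card (?col_later \<union> prod.swap ` ?row_later)"
    by (rule card_Un_disjoint[symmetric])
  also have "\<dots> \<le> card (C \<times> R)"
    using fin sub by (intro card_mono) auto
  finally have "card ?col_later + card (prod.swap ` ?row_later) \<le> card (C \<times> R)" .
  then have "card ?col_later + card ?row_later \<le> card C * card R"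
    by (simp add: card_image card_cartesian_product)
  then show ?thesis
    using columns_count[OF assms] rows_count[OF assms] by linarith
qed

lemma gamma_bound_at_outer_boundary:
  assumes "zero_set Z" "finite Z" "Z \<noteq> {}" "rect a b \<subseteq> Z" "finite Y" "(0, 0) \<in> Y"
  obtains k l where "(k, l) \<in> outer_boundary Y"
    "k * b + l * a + gamma (shift_down Z l) + gamma (shift_left Z k) \<le> 2 * gamma Z + k * l"
proof -
  obtain A where A: "finite A" "card A = gamma Z" "spans Z A"
    using gamma_attained[OF assms(2,3)] .
  obtain C R where seg: "initial_segment (col_full_time Z A b) (row_full_time Z A a) C R"
    and boundary: "(card C, card R) \<in> outer_boundary Y"
    using initial_segment_at_outer_boundary[OF assms(5,6)] .
  have "finite C" "finite R"
    using seg unfolding initial_segment_def by blast+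
  then have "gamma (shift_left Z (card C)) + card (A \<inter> {p. fst p \<in> C}) \<le> card A"
    "gamma (shift_down Z (card R)) + card (A \<inter> {p. snd p \<in> R}) \<le> card A"
    using gamma_shift_left_le gamma_shift_down_le assms(1) A by blast+
  then show thesis
    using that[OF boundary] full_lines_count[OF assms(4) A(3,1) seg] A(2) by linarith
qed

theorem mainTheorem9:
  fixes Z Y :: "(nat \<times> nat) set" and a b :: nat
  assumes "zero_set Z" and "finite Z"
    and "a \<ge> 1" and "b \<ge> 1" and "rect a b \<subseteq> Z"
    and "young_diagram Y" and "Y \<noteq> {}" and "Y \<subseteq> rect (a - 1) (b - 1)"
  shows "real (gamma Z) \<ge> (1/2) * Min ((\<lambda>(k, l). real k * real b + real l * real a - real k * real l
            + real (gamma (shift_down Z l)) + real (gamma (shift_left Z k))) ` outer_boundary Y)"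
proof -
  define f where "f = (\<lambda>(k, l). real k * real b + real l * real a - real k * real l
            + real (gamma (shift_down Z l)) + real (gamma (shift_left Z k)))"
  obtain p where "p \<in> Y"
    using assms(7) by blast
  then have "(0, 0) \<in> Y"
    using assms(6) zero_set_downward_closed[of Y "fst p" "snd p"] unfolding young_diagram_def by simp
  moreover have "(0, 0) \<in> Z"
    using assms(3-5) unfolding rect_def by auto
  ultimately obtain k l where kl: "(k, l) \<in> outer_boundary Y"
    and bound: "k * b + l * a + gamma (shift_down Z l) + gamma (shift_left Z k) \<le> 2 * gamma Z + k * l"
    using gamma_bound_at_outer_boundary[OF assms(1,2) _ assms(5)] assms(6)
    unfolding young_diagram_def by (metis empty_iff)
  have "Min (f ` outer_boundary Y) \<le> f (k, l)"
    using kl assms(6) by (simp add: finite_outer_boundary young_diagram_def)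
  also have "\<dots> \<le> 2 * real (gamma Z)"
    using of_nat_mono[OF bound, where 'a = real] unfolding f_def by simp
  finally show ?thesis
    unfolding f_def by simp
qed

end
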